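(* Let $a=(a_j)_{j\in\mathbb Z}\subset\mathbb R$ be such that $$\lim_{k\to\infty}\frac1k\sum_{j=0}^{k-1}a_j=\lim_{k\to\infty}\frac1k\sum_{j=-1}^{-k}a_j=\bar a.$$ For $n\in\mathbb N$ let $p^{(n)}=(p^{(n)}_j)_{j\in\mathbb Z}$ be the density of a probability distribution on $\mathbb Z$, with expectation denoted $\mathcal E_n$, such that (i) $j\mapsto p^{(n)}_j$ is increasing on $\mathbb Z^-$ and decreasing on $\mathbb Z_0^+$; (ii) for all $r\in\mathbb N$, $\mathcal E_n(1_{[-r,r]})=\sum_{j=-r}^rp^{(n)}_j\to0$ as $n\to\infty$. Then $$\lim_{n\to\infty}\mathcal E_n(a)=\lim_{n\to\infty}\sum_{j\in\mathbb Z}p^{(n)}_ja_j=\bar a.$$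
   Context: $\mathbb Z^-$ denotes the negative integers and $\mathbb Z_0^+$ the non-negative integers; monotonicity in (i) is in the weak sense. *)

theory Defs
  imports "HOL-Analysis.Analysis"
begin

definition zsum :: "(int \<Rightarrow> real) \<Rightarrow> real" where
  "zsum f = (\<Sum>j. f (int j)) + (\<Sum>j. f (- int j - 1))"

end

theory Submission
  imports Defs
begin

text \<open>Split the expectation at 0 into two one-sided series whose weights \<open>q\<close> are
nonnegative and nonincreasing. Summation by parts rewrites \<open>\<Sum>j. q j * a j\<close> as
\<open>\<Sum>i. (q i - q (i+1)) * A (i+1)\<close> with \<open>A\<close> the partial sums of \<open>a\<close>; the boundary term
vanishes because \<open>N * q N \<le> \<Sum>q\<close> and \<open>A N = o(N)\<close>. As the weight differences are
nonnegative, the Cesaro bound \<open>\<bar>A k - abar * k\<bar> \<le> M + \<epsilon> * k\<close> gives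
\<open>\<bar>\<Sum>j. q j * a j - abar * \<Sum>q\<bar> \<le> M * q 0 + \<epsilon> * \<Sum>q\<close>. Here \<open>M\<close> depends only on \<open>a\<close>
and \<open>\<epsilon>\<close>, while the two central weights \<open>p 0\<close> and \<open>p (-1)\<close> tend to zero by (ii), so the
expectation is eventually within \<open>2 * \<epsilon>\<close> of \<open>abar\<close>.\<close>

lemma mean_limit_imp_deviation_bound:
  fixes T :: "nat \<Rightarrow> real"
  assumes lim: "(\<lambda>k. T k / real k) \<longlonglongrightarrow> c" and "\<epsilon> > 0"
  obtains M where "\<And>j. \<bar>T j - c * real j\<bar> \<le> M + \<epsilon> * real j"
proof -
  obtain N where N: "\<And>k. k \<ge> N \<Longrightarrow> \<bar>T k / real k - c\<bar> < \<epsilon>"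
    using LIMSEQ_D[OF lim \<open>\<epsilon> > 0\<close>] by auto
  define M where "M = (\<Sum>j\<le>N. \<bar>T j - c * real j\<bar>)"
  have "\<bar>T j - c * real j\<bar> \<le> M + \<epsilon> * real j" for j
  proof (cases "j \<le> N")
    case True
    then have "\<bar>T j - c * real j\<bar> \<le> M"
      unfolding M_def by (intro member_le_sum) auto
    then show ?thesis using \<open>\<epsilon> > 0\<close> by (simp add: add_increasing2)
  next
    case False
    then have "j > 0" "\<bar>T j / real j - c\<bar> < \<epsilon>"
      using N by auto
    moreover have "\<bar>T j - c * real j\<bar> = \<bar>T j / real j - c\<bar> * real j"
      using \<open>j > 0\<close> by (simp add: abs_mult [symmetric] field_simps)
    moreover have "M \<ge> 0" unfolding M_def by (simp add: sum_nonneg)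
    ultimately show ?thesis
      by (smt (verit, best) mult_right_mono of_nat_0_le_iff)
  qed
  then show thesis by (rule that)
qed

lemma sum_mult_summation_by_parts:
  fixes q b :: "nat \<Rightarrow> 'a::comm_ring"
  shows "(\<Sum>j<N. q j * b j)
    = (\<Sum>i<N. (q i - q (Suc i)) * (\<Sum>k<Suc i. b k)) + q N * (\<Sum>k<N. b k)"
  by (induction N) (simp_all add: algebra_simps)

lemma sum_diff_mult_Suc:
  fixes q :: "nat \<Rightarrow> 'a::comm_ring_1"
  shows "(\<Sum>i<N. (q i - q (Suc i)) * of_nat (Suc i)) = (\<Sum>i<N. q i) - of_nat N * q N"
  by (induction N) (simp_all add: algebra_simps)

lemma summation_by_parts_series_bound:
  fixes q b :: "nat \<Rightarrow> real"
  assumes anti: "\<And>i j. i \<le> j \<Longrightarrow> q j \<le> q i" and nonneg: "\<And>j. q j \<ge> 0"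
    and "summable q" and "E \<ge> 0"
    and bound: "\<And>j. \<bar>\<Sum>k<j. b k\<bar> \<le> M + E * real j"
  shows "summable (\<lambda>i. (q i - q (Suc i)) * (\<Sum>k<Suc i. b k))"
    and "\<bar>\<Sum>i. (q i - q (Suc i)) * (\<Sum>k<Suc i. b k)\<bar> \<le> M * q 0 + E * suminf q"
proof -
  define u where "u i = (q i - q (Suc i)) * (\<Sum>k<Suc i. b k)" for i
  define w where "w i = (q i - q (Suc i)) * (M + E * real (Suc i))" for i
  have step_nonneg: "q i - q (Suc i) \<ge> 0" for i
    using anti[of i "Suc i"] by simp
  have "M \<ge> 0" using bound[of 0] by simp
  have u_le_w: "norm (u i) \<le> w i" for i
    unfolding u_def w_def real_norm_def abs_mult
    using step_nonneg[of i] bound[of "Suc i"] by (simp add: mult_left_mono)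
  have w_nonneg: "w i \<ge> 0" for i
    unfolding w_def using step_nonneg[of i] \<open>M \<ge> 0\<close> \<open>E \<ge> 0\<close> by simp
  have w_partial: "(\<Sum>i<N. w i) \<le> M * q 0 + E * suminf q" for N
  proof -
    have "(\<Sum>i<N. w i)
        = M * (\<Sum>i<N. q i - q (Suc i)) + E * (\<Sum>i<N. (q i - q (Suc i)) * real (Suc i))"
      unfolding w_def sum_distrib_left sum.distrib [symmetric] by (simp add: algebra_simps)
    also have "\<dots> = M * (q 0 - q N) + E * ((\<Sum>i<N. q i) - real N * q N)"
      by (simp only: sum_lessThan_telescope' sum_diff_mult_Suc)
    also have "\<dots> \<le> M * q 0 + E * suminf q"
      using \<open>M \<ge> 0\<close> \<open>E \<ge> 0\<close> nonneg[of N]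
        sum_le_suminf[OF \<open>summable q\<close>, of "{..<N}"] nonneg
      by (intro add_mono mult_left_mono) (auto simp: diff_le_eq add_increasing2)
    finally show ?thesis .
  qed
  have "summable w"
  proof (rule bounded_imp_summable)
    show "(\<Sum>k\<le>n. w k) \<le> M * q 0 + E * suminf q" for n
      using w_partial[of "Suc n"] by (simp add: lessThan_Suc_atMost)
  qed (rule w_nonneg)
  then have "summable (\<lambda>i. norm (u i))"
    by (rule summable_comparison_test[rotated]) (use u_le_w in auto)
  then show "summable u" unfolding u_def[abs_def] by (rule summable_norm_cancel)
  have "\<bar>suminf u\<bar> \<le> (\<Sum>i. norm (u i))"
    using summable_norm[OF \<open>summable (\<lambda>i. norm (u i))\<close>] by simp
  also have "\<dots> \<le> suminf w"
    by (rule suminf_le[OF u_le_w \<open>summable (\<lambda>i. norm (u i))\<close> \<open>summable w\<close>])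
  also have "\<dots> \<le> M * q 0 + E * suminf q"
    by (rule suminf_le_const[OF \<open>summable w\<close> w_partial])
  finally show "\<bar>\<Sum>i. (q i - q (Suc i)) * (\<Sum>k<Suc i. b k)\<bar> \<le> M * q 0 + E * suminf q"
    unfolding u_def .
qed

lemma sums_summation_by_parts:
  fixes q b :: "nat \<Rightarrow> real"
  assumes anti: "\<And>i j. i \<le> j \<Longrightarrow> q j \<le> q i" and nonneg: "\<And>j. q j \<ge> 0"
    and "summable q"
    and mean: "(\<lambda>k. (\<Sum>j<k. b j) / real k) \<longlonglongrightarrow> 0"
  shows "(\<lambda>j. q j * b j) sums (\<Sum>i. (q i - q (Suc i)) * (\<Sum>k<Suc i. b k))"
proof -
  define B where "B k = (\<Sum>j<k. b j)" for k
  obtain M where "\<And>j. \<bar>B j - 0 * real j\<bar> \<le> M + 1 * real j"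
    using mean_limit_imp_deviation_bound[OF mean[folded B_def] zero_less_one] by blast
  then have "summable (\<lambda>i. (q i - q (Suc i)) * B (Suc i))"
    using summation_by_parts_series_bound(1)[OF anti nonneg \<open>summable q\<close>, of 1 b M]
    by (simp add: B_def)
  moreover have "(\<lambda>N. q N * B N) \<longlonglongrightarrow> 0"
  proof (rule Lim_null_comparison)
    have "norm (q N * B N) \<le> suminf q * \<bar>B N / real N\<bar>" for N
    proof -
      have "real N * q N = (\<Sum>i<N. q N)" by simp
      also have "\<dots> \<le> (\<Sum>i<N. q i)" by (intro sum_mono anti) simp
      also have "\<dots> \<le> suminf q" by (rule sum_le_suminf[OF \<open>summable q\<close>]) (auto intro: nonneg)
      finally have "real N * q N \<le> suminf q" .
      have "norm (q N * B N) = (real N * q N) * \<bar>B N / real N\<bar>"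
        using nonneg[of N] by (cases "N = 0") (simp_all add: B_def abs_mult)
      also have "\<dots> \<le> suminf q * \<bar>B N / real N\<bar>"
        by (rule mult_right_mono[OF \<open>real N * q N \<le> suminf q\<close> abs_ge_zero])
      finally show ?thesis .
    qed
    then show "\<forall>\<^sub>F N in sequentially. norm (q N * B N) \<le> suminf q * \<bar>B N / real N\<bar>"
      by simp
    show "(\<lambda>N. suminf q * \<bar>B N / real N\<bar>) \<longlonglongrightarrow> 0"
      using mean by (intro tendsto_mult_right_zero tendsto_rabs_zero) (simp add: B_def)
  qed
  ultimately have "(\<lambda>N. (\<Sum>i<N. (q i - q (Suc i)) * B (Suc i)) + q N * B N)
      \<longlonglongrightarrow> (\<Sum>i. (q i - q (Suc i)) * B (Suc i)) + 0"
    by (intro tendsto_add summable_LIMSEQ)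
  moreover have "(\<Sum>j<N. q j * b j) = (\<Sum>i<N. (q i - q (Suc i)) * B (Suc i)) + q N * B N" for N
    unfolding B_def by (rule sum_mult_summation_by_parts)
  ultimately show ?thesis
    unfolding sums_def B_def by simp
qed

lemma weighted_sum_deviation_le:
  fixes q b :: "nat \<Rightarrow> real"
  assumes anti: "\<And>i j. i \<le> j \<Longrightarrow> q j \<le> q i" and nonneg: "\<And>j. q j \<ge> 0"
    and "summable q" and "E \<ge> 0"
    and mean: "(\<lambda>k. (\<Sum>j<k. b j) / real k) \<longlonglongrightarrow> c"
    and bound: "\<And>j. \<bar>(\<Sum>k<j. b k) - c * real j\<bar> \<le> M + E * real j"
  shows "summable (\<lambda>j. q j * b j)"
    and "\<bar>(\<Sum>j. q j * b j) - c * suminf q\<bar> \<le> M * q 0 + E * suminf q"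
proof -
  define d where "d j = b j - c" for j
  have partial_d: "(\<Sum>k<j. d k) = (\<Sum>k<j. b k) - c * real j" for j
    by (simp add: d_def sum_subtractf)
  have "(\<lambda>k. (\<Sum>j<k. d j) / real k) \<longlonglongrightarrow> c - c"
  proof (rule Lim_transform_eventually)
    show "(\<lambda>k. (\<Sum>j<k. b j) / real k - c) \<longlonglongrightarrow> c - c"
      by (intro tendsto_diff mean tendsto_const)
    show "\<forall>\<^sub>F k in sequentially. (\<Sum>j<k. b j) / real k - c = (\<Sum>j<k. d j) / real k"
      using eventually_gt_at_top[of 0] by eventually_elim (simp add: partial_d field_simps)
  qed
  then have d_sums: "(\<lambda>j. q j * d j) sums (\<Sum>i. (q i - q (Suc i)) * (\<Sum>k<Suc i. d k))"
    by (intro sums_summation_by_parts anti nonneg \<open>summable q\<close>) simp_all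
  have d_bound: "\<bar>\<Sum>i. (q i - q (Suc i)) * (\<Sum>k<Suc i. d k)\<bar> \<le> M * q 0 + E * suminf q"
    using bound by (intro summation_by_parts_series_bound(2) anti nonneg \<open>summable q\<close> \<open>E \<ge> 0\<close>)
      (simp_all only: partial_d)
  have "(\<lambda>j. q j * d j + c * q j) sums ((\<Sum>i. (q i - q (Suc i)) * (\<Sum>k<Suc i. d k)) + c * suminf q)"
    by (intro sums_add d_sums sums_mult summable_sums \<open>summable q\<close>)
  then have "(\<lambda>j. q j * b j) sums ((\<Sum>i. (q i - q (Suc i)) * (\<Sum>k<Suc i. d k)) + c * suminf q)"
    by (simp add: d_def algebra_simps)
  then show "summable (\<lambda>j. q j * b j)"
    and "\<bar>(\<Sum>j. q j * b j) - c * suminf q\<bar> \<le> M * q 0 + E * suminf q"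
    using d_bound by (auto simp: sums_iff)
qed

lemma has_sum_int_split:
  fixes f :: "int \<Rightarrow> 'a::banach"
  assumes "(f has_sum s) UNIV"
  obtains s_pos s_neg where "(\<lambda>j. f (int j)) sums s_pos" and "(\<lambda>j. f (- int j - 1)) sums s_neg"
    and "s = s_pos + s_neg"
proof -
  define neg :: "nat \<Rightarrow> int" where "neg j = - int j - 1" for j
  have "f summable_on UNIV" using assms by (rule has_sum_imp_summable)
  then have "(f has_sum infsum f (int ` UNIV)) (int ` UNIV)"
    and "(f has_sum infsum f (neg ` UNIV)) (neg ` UNIV)"
    by (auto intro!: has_sum_infsum intro: summable_on_subset_banach)
  moreover have "inj int" and "inj neg" by (auto simp: inj_def neg_def)
  ultimately have pos_sums: "((f \<circ> int) has_sum infsum f (int ` UNIV)) UNIV"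
    and neg_sums: "((f \<circ> neg) has_sum infsum f (neg ` UNIV)) UNIV"
    by (simp_all add: has_sum_reindex)
  have "int ` UNIV \<union> neg ` UNIV = UNIV"
  proof -
    have "x \<in> int ` UNIV \<union> neg ` UNIV" for x
      by (cases "x \<ge> 0") (auto simp: neg_def image_iff intro: exI[of _ "nat x"] exI[of _ "nat (- x - 1)"])
    then show ?thesis by blast
  qed
  moreover have "int ` UNIV \<inter> neg ` UNIV = {}" by (auto simp: neg_def)
  ultimately have "(f has_sum (infsum f (int ` UNIV) + infsum f (neg ` UNIV))) UNIV"
    using has_sum_Un_disjoint[OF \<open>(f has_sum _) (int ` UNIV)\<close> \<open>(f has_sum _) (neg ` UNIV)\<close>]
    by simp
  then have "s = infsum f (int ` UNIV) + infsum f (neg ` UNIV)"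
    using assms by (rule has_sum_unique[rotated])
  with pos_sums neg_sums show thesis
    by (intro that) (auto dest!: has_sum_imp_sums simp: o_def neg_def)
qed

lemma tendsto_if_close_up_to_null:
  fixes x :: "nat \<Rightarrow> real"
  assumes "\<And>\<epsilon>. \<epsilon> > 0 \<Longrightarrow> \<exists>\<delta>. \<delta> \<longlonglongrightarrow> 0 \<and> (\<forall>n. \<bar>x n - l\<bar> \<le> \<delta> n + \<epsilon>)"
  shows "x \<longlonglongrightarrow> l"
proof (rule LIMSEQ_I)
  fix r :: real assume "r > 0"
  then obtain \<delta> where "\<delta> \<longlonglongrightarrow> 0" and close: "\<And>n. \<bar>x n - l\<bar> \<le> \<delta> n + r / 2"
    using assms[of "r / 2"] by auto
  then obtain N where "\<And>n. n \<ge> N \<Longrightarrow> \<bar>\<delta> n\<bar> < r / 2"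
    using LIMSEQ_D[of \<delta> 0 "r / 2"] \<open>r > 0\<close> by auto
  then show "\<exists>N. \<forall>n\<ge>N. norm (x n - l) < r"
    using close by (smt (verit, best) field_sum_of_halves real_norm_def)
qed

lemma tendsto_zero_if_nonneg_sum_tendsto_zero:
  fixes f :: "'a \<Rightarrow> 'b \<Rightarrow> real"
  assumes "\<And>n i. i \<in> A \<Longrightarrow> f n i \<ge> 0" and "finite A" and "j \<in> A"
    and "((\<lambda>n. \<Sum>i\<in>A. f n i) \<longlongrightarrow> 0) F"
  shows "((\<lambda>n. f n j) \<longlongrightarrow> 0) F"
proof (rule tendsto_sandwich[OF _ _ tendsto_const assms(4)])
  show "\<forall>\<^sub>F n in F. 0 \<le> f n j" and "\<forall>\<^sub>F n in F. f n j \<le> (\<Sum>i\<in>A. f n i)"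
    using assms(1-3) by (auto intro!: always_eventually member_le_sum)
qed

lemma zsum_deviation_le:
  fixes p a :: "int \<Rightarrow> real"
  assumes mean_pos: "(\<lambda>k. (\<Sum>j<k. a (int j)) / real k) \<longlonglongrightarrow> c"
      and mean_neg: "(\<lambda>k. (\<Sum>j<k. a (- int j - 1)) / real k) \<longlonglongrightarrow> c"
      and nonneg: "\<And>j. p j \<ge> 0" and prob: "(p has_sum 1) UNIV"
      and incr_neg: "\<And>i j. i \<le> j \<Longrightarrow> j < 0 \<Longrightarrow> p i \<le> p j"
      and decr_pos: "\<And>i j. 0 \<le> i \<Longrightarrow> i \<le> j \<Longrightarrow> p j \<le> p i"
      and "E \<ge> 0"
      and bound_pos: "\<And>j. \<bar>(\<Sum>k<j. a (int k)) - c * real j\<bar> \<le> M_pos + E * real j"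
      and bound_neg: "\<And>j. \<bar>(\<Sum>k<j. a (- int k - 1)) - c * real j\<bar> \<le> M_neg + E * real j"
  shows "summable (\<lambda>j. p (int j) * a (int j))"
    and "summable (\<lambda>j. p (- int j - 1) * a (- int j - 1))"
    and "\<bar>zsum (\<lambda>j. p j * a j) - c\<bar> \<le> M_pos * p 0 + M_neg * p (- 1) + E"
proof -
  obtain s_pos s_neg where pos_sums: "(\<lambda>j. p (int j)) sums s_pos"
    and neg_sums: "(\<lambda>j. p (- int j - 1)) sums s_neg" and "1 = s_pos + s_neg"
    using has_sum_int_split[OF prob] by blast
  have pos: "summable (\<lambda>j. p (int j) * a (int j))"
    "\<bar>(\<Sum>j. p (int j) * a (int j)) - c * s_pos\<bar> \<le> M_pos * p 0 + E * s_pos"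
    using weighted_sum_deviation_le[of "\<lambda>j. p (int j)", OF _ nonneg sums_summable[OF pos_sums]
        \<open>E \<ge> 0\<close> mean_pos bound_pos] decr_pos sums_unique[OF pos_sums]
    by auto
  have neg: "summable (\<lambda>j. p (- int j - 1) * a (- int j - 1))"
    "\<bar>(\<Sum>j. p (- int j - 1) * a (- int j - 1)) - c * s_neg\<bar> \<le> M_neg * p (- 1) + E * s_neg"
    using weighted_sum_deviation_le[of "\<lambda>j. p (- int j - 1)", OF _ nonneg sums_summable[OF neg_sums]
        \<open>E \<ge> 0\<close> mean_neg bound_neg] incr_neg sums_unique[OF neg_sums]
    by auto
  show "summable (\<lambda>j. p (int j) * a (int j))" "summable (\<lambda>j. p (- int j - 1) * a (- int j - 1))"
    by (fact pos(1) neg(1))+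
  have "zsum (\<lambda>j. p j * a j) - c
      = ((\<Sum>j. p (int j) * a (int j)) - c * s_pos) + ((\<Sum>j. p (- int j - 1) * a (- int j - 1)) - c * s_neg)"
    unfolding zsum_def using \<open>1 = s_pos + s_neg\<close> by (simp add: algebra_simps flip: distrib_left)
  also have "\<bar>\<dots>\<bar> \<le> (M_pos * p 0 + E * s_pos) + (M_neg * p (- 1) + E * s_neg)"
    using pos(2) neg(2) by linarith
  also have "\<dots> = M_pos * p 0 + M_neg * p (- 1) + E"
    using \<open>1 = s_pos + s_neg\<close> by (simp add: algebra_simps flip: distrib_left)
  finally show "\<bar>zsum (\<lambda>j. p j * a j) - c\<bar> \<le> M_pos * p 0 + M_neg * p (- 1) + E" .
qed

theorem lemmaA5:
  fixes a :: "int \<Rightarrow> real" and abar :: real and p :: "nat \<Rightarrow> int \<Rightarrow> real"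
  assumes avg_pos: "(\<lambda>k. (\<Sum>j<k. a (int j)) / real k) \<longlonglongrightarrow> abar"
      and avg_neg: "(\<lambda>k. (\<Sum>j<k. a (- int j - 1)) / real k) \<longlonglongrightarrow> abar"
      and nonneg: "\<And>n j. p n j \<ge> 0"
      and prob: "\<And>n. (p n has_sum 1) UNIV"
      and incr_neg: "\<And>n i j. i \<le> j \<Longrightarrow> j < 0 \<Longrightarrow> p n i \<le> p n j"
      and decr_pos: "\<And>n i j. 0 \<le> i \<Longrightarrow> i \<le> j \<Longrightarrow> p n j \<le> p n i"
      and vanish: "\<And>r::nat. (\<lambda>n. \<Sum>j\<in>{- int r..int r}. p n j) \<longlonglongrightarrow> 0"
  shows "(\<forall>n. summable (\<lambda>j. p n (int j) * a (int j))
              \<and> summable (\<lambda>j. p n (- int j - 1) * a (- int j - 1)))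
         \<and> (\<lambda>n. zsum (\<lambda>j. p n j * a j)) \<longlonglongrightarrow> abar"
proof
  have deviation: "summable (\<lambda>j. p n (int j) * a (int j))
      \<and> summable (\<lambda>j. p n (- int j - 1) * a (- int j - 1))
      \<and> \<bar>zsum (\<lambda>j. p n j * a j) - abar\<bar> \<le> M_pos * p n 0 + M_neg * p n (- 1) + E"
    if "E \<ge> 0"
      and "\<And>j. \<bar>(\<Sum>k<j. a (int k)) - abar * real j\<bar> \<le> M_pos + E * real j"
      and "\<And>j. \<bar>(\<Sum>k<j. a (- int k - 1)) - abar * real j\<bar> \<le> M_neg + E * real j"
    for n E M_pos M_neg
    using zsum_deviation_le[where p = "p n", OF avg_pos avg_neg nonneg prob incr_neg decr_pos that]
    by blast
  obtain M_pos M_neg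
    where "\<And>j. \<bar>(\<Sum>k<j. a (int k)) - abar * real j\<bar> \<le> M_pos + 1 * real j"
      and "\<And>j. \<bar>(\<Sum>k<j. a (- int k - 1)) - abar * real j\<bar> \<le> M_neg + 1 * real j"
    using mean_limit_imp_deviation_bound[OF avg_pos] mean_limit_imp_deviation_bound[OF avg_neg]
    by (metis zero_less_one)
  then show "\<forall>n. summable (\<lambda>j. p n (int j) * a (int j))
      \<and> summable (\<lambda>j. p n (- int j - 1) * a (- int j - 1))"
    using deviation[OF zero_le_one] by blast
  have "(\<lambda>n. p n 0) \<longlonglongrightarrow> 0" and "(\<lambda>n. p n (- 1)) \<longlonglongrightarrow> 0"
    by (rule tendsto_zero_if_nonneg_sum_tendsto_zero[OF nonneg _ _ vanish[of 1]]; simp)+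
  show "(\<lambda>n. zsum (\<lambda>j. p n j * a j)) \<longlonglongrightarrow> abar"
  proof (rule tendsto_if_close_up_to_null)
    fix \<epsilon> :: real assume "\<epsilon> > 0"
    obtain M_pos M_neg
      where "\<And>j. \<bar>(\<Sum>k<j. a (int k)) - abar * real j\<bar> \<le> M_pos + \<epsilon> * real j"
        and "\<And>j. \<bar>(\<Sum>k<j. a (- int k - 1)) - abar * real j\<bar> \<le> M_neg + \<epsilon> * real j"
      using mean_limit_imp_deviation_bound[OF avg_pos \<open>\<epsilon> > 0\<close>]
        mean_limit_imp_deviation_bound[OF avg_neg \<open>\<epsilon> > 0\<close>] by metis
    then have "\<bar>zsum (\<lambda>j. p n j * a j) - abar\<bar> \<le> (M_pos * p n 0 + M_neg * p n (- 1)) + \<epsilon>" for n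
      using deviation \<open>\<epsilon> > 0\<close> by (simp add: less_imp_le)
    moreover have "(\<lambda>n. M_pos * p n 0 + M_neg * p n (- 1)) \<longlonglongrightarrow> 0"
      using tendsto_add[OF tendsto_mult_right_zero tendsto_mult_right_zero] \<open>(\<lambda>n. p n 0) \<longlonglongrightarrow> 0\<close>
        \<open>(\<lambda>n. p n (- 1)) \<longlonglongrightarrow> 0\<close> by fastforce
    ultimately show "\<exists>\<delta>. \<delta> \<longlonglongrightarrow> 0 \<and> (\<forall>n. \<bar>zsum (\<lambda>j. p n j * a j) - abar\<bar> \<le> \<delta> n + \<epsilon>)"
      by blast
  qed
qed

end
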